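(* For each $k\in\{1,2\}$ there exist a probability space and random variables $A_1,A_2,B_1,B_2,C_k$ on it, each taking values in $\{1,-1\}$, such that $\langle A_i\rangle=\langle B_i\rangle=\langle C_k\rangle=0$ and $\langle A_iB_j\rangle=\langle A_iC_k\rangle=\langle B_iC_k\rangle=0$ for all $i,j\in\{1,2\}$, and moreover: for $k=1$: $\langle A_1B_1C_1\rangle=-1$, $\langle A_2B_2C_1\rangle=-1$, $\langle A_1B_2C_1\rangle=\langle A_2B_1C_1\rangle=0$; for $k=2$: $\langle A_2B_1C_2\rangle=-1$, $\langle A_1B_2C_2\rangle=+1$, $\langle A_2B_2C_2\rangle=\langle A_1B_1C_2\rangle=0$. Furthermore, in every such model for $k=1$ one has $\langle A_1A_2B_1B_2\rangle=1$, in every such model for $k=2$ one has $\langle A_1A_2B_1B_2\rangle=-1$, and the two models can be chosen so that all other correlations among $A_1,A_2,B_1,B_2$ (i.e. the joint distribution of every proper subfamily of these four variables, including $\langle A_1A_2\rangle=\langle B_1B_2\rangle=0$ and $\langle A_iB_1B_2\rangle=\langle B_iA_1A_2\rangle=0$) coincide in the two models.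
   Context: $\langle\cdot\rangle$ denotes expectation. These correlations are the quantum-mechanical predictions of the Greenberger–Horne–Shimony–Zeilinger state $\tfrac{1}{\sqrt2}(|+++\rangle-|---\rangle)$ (in the eigenbasis of $\sigma_z$ for three spin-$1/2$ particles) for the observables $A_1=-\sigma^1_x$, $A_2=-\sigma^1_y$, $B_1=\sigma^2_y$, $B_2=\sigma^2_x$, $C_1=\sigma^3_y$, $C_2=\sigma^3_x$, where $\sigma^i_k$ are Pauli matrices on particle $i$; the compatible sets (contexts) are those containing at most one $A$, one $B$ and one $C$. Thus each model reproduces all quantum predictions for the four contexts $\{A_i,B_j,C_k\}$ with the given $k$. *)

theory Defs
  imports "HOL-Probability.Probability"
begin

definition pm1_rv :: "'a measure \<Rightarrow> ('a \<Rightarrow> real) \<Rightarrow> bool" where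
  "pm1_rv M X \<longleftrightarrow> X \<in> borel_measurable M \<and> (\<forall>\<omega>\<in>space M. X \<omega> \<in> {1, -1})"

definition corr :: "'a measure \<Rightarrow> ('a \<Rightarrow> real) list \<Rightarrow> real" where
  "corr M Xs = integral\<^sup>L M (\<lambda>\<omega>. prod_list (map (\<lambda>X. X \<omega>) Xs))"

definition base_model :: "'a measure \<Rightarrow> ('a \<Rightarrow> real) \<Rightarrow> ('a \<Rightarrow> real) \<Rightarrow> ('a \<Rightarrow> real)
    \<Rightarrow> ('a \<Rightarrow> real) \<Rightarrow> ('a \<Rightarrow> real) \<Rightarrow> bool" where
  "base_model M A1 A2 B1 B2 C \<longleftrightarrow>
     prob_space M \<and>
     pm1_rv M A1 \<and> pm1_rv M A2 \<and> pm1_rv M B1 \<and> pm1_rv M B2 \<and> pm1_rv M C \<and>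
     (\<forall>X\<in>{A1, A2, B1, B2, C}. corr M [X] = 0) \<and>
     (\<forall>X\<in>{A1, A2}. \<forall>Y\<in>{B1, B2}. corr M [X, Y] = 0) \<and>
     (\<forall>X\<in>{A1, A2}. corr M [X, C] = 0) \<and>
     (\<forall>Y\<in>{B1, B2}. corr M [Y, C] = 0)"

definition model1 :: "'a measure \<Rightarrow> ('a \<Rightarrow> real) \<Rightarrow> ('a \<Rightarrow> real) \<Rightarrow> ('a \<Rightarrow> real)
    \<Rightarrow> ('a \<Rightarrow> real) \<Rightarrow> ('a \<Rightarrow> real) \<Rightarrow> bool" where
  "model1 M A1 A2 B1 B2 C1 \<longleftrightarrow> base_model M A1 A2 B1 B2 C1 \<and>
     corr M [A1, B1, C1] = -1 \<and> corr M [A2, B2, C1] = -1 \<and>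
     corr M [A1, B2, C1] = 0 \<and> corr M [A2, B1, C1] = 0"

definition model2 :: "'a measure \<Rightarrow> ('a \<Rightarrow> real) \<Rightarrow> ('a \<Rightarrow> real) \<Rightarrow> ('a \<Rightarrow> real)
    \<Rightarrow> ('a \<Rightarrow> real) \<Rightarrow> ('a \<Rightarrow> real) \<Rightarrow> bool" where
  "model2 M A1 A2 B1 B2 C2 \<longleftrightarrow> base_model M A1 A2 B1 B2 C2 \<and>
     corr M [A2, B1, C2] = -1 \<and> corr M [A1, B2, C2] = 1 \<and>
     corr M [A2, B2, C2] = 0 \<and> corr M [A1, B1, C2] = 0"

definition fam4 :: "('a \<Rightarrow> real) \<Rightarrow> ('a \<Rightarrow> real) \<Rightarrow> ('a \<Rightarrow> real) \<Rightarrow> ('a \<Rightarrow> real)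
    \<Rightarrow> nat \<Rightarrow> 'a \<Rightarrow> real" where
  "fam4 A1 A2 B1 B2 i = (if i = 0 then A1 else if i = 1 then A2 else if i = 2 then B1 else B2)"

definition joint_distr :: "'a measure \<Rightarrow> (nat \<Rightarrow> 'a \<Rightarrow> real) \<Rightarrow> nat set \<Rightarrow> (nat \<Rightarrow> real) measure" where
  "joint_distr M X S = distr M (PiM S (\<lambda>_. borel)) (\<lambda>\<omega>. \<lambda>i\<in>S. X i \<omega>)"

end

theory Submission
  imports Defs
begin

text \<open>If C is a sign, then A1 A2 B1 B2 = (A1 B1 C)(A2 B2 C) pointwise. In either context both
  triples on the right are almost surely constant, so the fourfold product is almost surely the
  product of the two triple correlations: (-1)(-1) = 1 for k = 1 and (-1) 1 = -1 for k = 2.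

  The models live on the uniform distribution on {0..<8}, whose three binary digits give
  independent fair signs a1, a2, b1, and take b2 = \<plusminus>a1 a2 b1. A proper subfamily of
  (a1, a2, b1, \<plusminus>a1 a2 b1) omits one variable; flipping the corresponding bit (or nothing, if b2
  is omitted) is a measure-preserving bijection that carries one sign choice to the other on the
  remaining variables.\<close>

lemma pm1_rv_iff_abs:
  "pm1_rv M X \<longleftrightarrow> X \<in> borel_measurable M \<and> (\<forall>\<omega>\<in>space M. \<bar>X \<omega>\<bar> = 1)"
  unfolding pm1_rv_def by (auto simp: abs_if)

lemma pm1_rv_mult: "pm1_rv M X \<Longrightarrow> pm1_rv M Y \<Longrightarrow> pm1_rv M (\<lambda>\<omega>. X \<omega> * Y \<omega>)"
  by (auto simp: pm1_rv_iff_abs abs_mult)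

lemma pm1_rv_prod_list:
  assumes "\<forall>X\<in>set Xs. pm1_rv M X"
  shows "pm1_rv M (\<lambda>\<omega>. prod_list (map (\<lambda>X. X \<omega>) Xs))"
  using assms by (induction Xs) (simp_all add: pm1_rv_mult, simp add: pm1_rv_iff_abs)

lemma corr_mset_cong: "mset Xs = mset Ys \<Longrightarrow> corr M Xs = corr M Ys"
  unfolding corr_def prod_mset_prod_list[symmetric] mset_map by simp

lemma (in prob_space) AE_eq_of_integral_unit:
  fixes f :: "'a \<Rightarrow> real"
  assumes f: "f \<in> borel_measurable M" "\<forall>\<omega>\<in>space M. \<bar>f \<omega>\<bar> \<le> 1"
    and c: "\<bar>c\<bar> = 1" and integral: "integral\<^sup>L M f = c"
  shows "AE \<omega> in M. f \<omega> = c"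
proof -
  have "integrable M f"
    using f by (intro integrable_const_bound[where B = 1]) auto
  then have "integrable M (\<lambda>\<omega>. 1 - c * f \<omega>)" and "integral\<^sup>L M (\<lambda>\<omega>. 1 - c * f \<omega>) = 0"
    using integral c by (auto simp: prob_space abs_if split: if_splits)
  moreover have "AE \<omega> in M. 0 \<le> 1 - c * f \<omega>"
    using f c by (intro AE_I2) (auto simp: abs_if split: if_splits)
  ultimately have "AE \<omega> in M. 1 - c * f \<omega> = 0"
    by (simp add: integral_nonneg_eq_0_iff_AE)
  then show ?thesis
    by eventually_elim (use c in \<open>auto simp: abs_if split: if_splits\<close>)
qed

lemma (in prob_space) AE_corr_eq_unit:
  assumes "\<forall>X\<in>set Xs. pm1_rv M X" and "\<bar>c\<bar> = 1" and "corr M Xs = c"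
  shows "AE \<omega> in M. prod_list (map (\<lambda>X. X \<omega>) Xs) = c"
  using pm1_rv_prod_list[OF assms(1)] assms(2,3)
  by (intro AE_eq_of_integral_unit) (auto simp: pm1_rv_iff_abs corr_def)

lemma (in prob_space) corr_eq_of_AE:
  assumes "\<forall>X\<in>set Xs. pm1_rv M X" and "AE \<omega> in M. prod_list (map (\<lambda>X. X \<omega>) Xs) = c"
  shows "corr M Xs = c"
proof -
  have "corr M Xs = integral\<^sup>L M (\<lambda>_. c)"
    unfolding corr_def using pm1_rv_prod_list[OF assms(1)] assms(2)
    by (intro integral_cong_AE) (auto simp: pm1_rv_def)
  then show ?thesis
    by (simp add: prob_space)
qed

lemma (in prob_space) corr_four_eq_mult_of_triples:
  assumes pm1: "pm1_rv M X1" "pm1_rv M Y1" "pm1_rv M X2" "pm1_rv M Y2" "pm1_rv M C"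
    and c: "\<bar>c1\<bar> = 1" "\<bar>c2\<bar> = 1"
    and corr: "corr M [X1, Y1, C] = c1" "corr M [X2, Y2, C] = c2"
  shows "corr M [X1, Y1, X2, Y2] = c1 * c2"
proof (rule corr_eq_of_AE)
  have "AE \<omega> in M. X1 \<omega> * Y1 \<omega> * C \<omega> = c1" "AE \<omega> in M. X2 \<omega> * Y2 \<omega> * C \<omega> = c2"
    using AE_corr_eq_unit[of "[X1, Y1, C]" c1] AE_corr_eq_unit[of "[X2, Y2, C]" c2] pm1 c corr
    by (simp_all add: mult.assoc)
  moreover have "AE \<omega> in M. C \<omega> * C \<omega> = 1"
    using pm1(5) by (intro AE_I2) (auto simp: pm1_rv_iff_abs abs_if split: if_splits)
  ultimately show "AE \<omega> in M. prod_list (map (\<lambda>X. X \<omega>) [X1, Y1, X2, Y2]) = c1 * c2"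
  proof eventually_elim
    case (elim \<omega>)
    have "c1 * c2 = (X1 \<omega> * Y1 \<omega> * X2 \<omega> * Y2 \<omega>) * (C \<omega> * C \<omega>)"
      by (simp flip: elim(1,2) add: mult_ac)
    then show ?case
      by (simp add: elim(3) mult.assoc)
  qed
qed (use pm1 in auto)

lemma base_model_pm1:
  "base_model M A1 A2 B1 B2 C \<Longrightarrow>
    prob_space M \<and> pm1_rv M A1 \<and> pm1_rv M A2 \<and> pm1_rv M B1 \<and> pm1_rv M B2 \<and> pm1_rv M C"
  by (simp add: base_model_def)

lemma model1_corr_four: "model1 M A1 A2 B1 B2 C1 \<Longrightarrow> corr M [A1, A2, B1, B2] = 1"
  using prob_space.corr_four_eq_mult_of_triples[of M A1 B1 A2 B2 C1 "-1" "-1"]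
    corr_mset_cong[of "[A1, A2, B1, B2]" "[A1, B1, A2, B2]" M]
  by (auto simp: model1_def dest: base_model_pm1)

lemma model2_corr_four: "model2 M A1 A2 B1 B2 C2 \<Longrightarrow> corr M [A1, A2, B1, B2] = -1"
  using prob_space.corr_four_eq_mult_of_triples[of M A2 B1 A1 B2 C2 "-1" 1]
    corr_mset_cong[of "[A1, A2, B1, B2]" "[A2, B1, A1, B2]" M]
  by (auto simp: model2_def dest: base_model_pm1)

lemma joint_distr_pmf_of_set_bij:
  assumes "finite \<Omega>" "\<Omega> \<noteq> {}" and g: "bij_betw g \<Omega> \<Omega>"
    and XY: "\<forall>\<omega>\<in>\<Omega>. \<forall>i\<in>S. X i (g \<omega>) = Y i \<omega>"
  shows "joint_distr (measure_pmf (pmf_of_set \<Omega>)) X S = joint_distr (measure_pmf (pmf_of_set \<Omega>)) Y S"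
proof -
  let ?M = "measure_pmf (pmf_of_set \<Omega>)" and ?X = "\<lambda>\<omega>. \<lambda>i\<in>S. X i \<omega>"
  have "distr ?M (count_space UNIV) g = ?M"
    using assms g by (simp flip: map_pmf_rep_eq add: map_pmf_of_set_inj bij_betw_def)
  then have "joint_distr ?M X S = distr (distr ?M (count_space UNIV) g) (PiM S (\<lambda>_. borel)) ?X"
    unfolding joint_distr_def by simp
  also have "\<dots> = distr ?M (PiM S (\<lambda>_. borel)) (?X \<circ> g)"
    by (rule distr_distr) (simp_all add: space_PiM)
  also have "\<dots> = joint_distr ?M Y S"
    unfolding joint_distr_def using assms
    by (intro distr_cong_AE) (auto simp: AE_measure_pmf_iff space_PiM)
  finally show ?thesis .
qed

definition uniform8 :: "nat measure" where
  "uniform8 = measure_pmf (pmf_of_set {0..<8})"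

definition bit_sign :: "nat \<Rightarrow> nat \<Rightarrow> real" where
  "bit_sign k \<omega> = (if odd (\<omega> div 2 ^ k) then -1 else 1)"

definition flip_bit :: "nat \<Rightarrow> nat \<Rightarrow> nat" where
  "flip_bit k \<omega> = (if odd (\<omega> div 2 ^ k) then \<omega> - 2 ^ k else \<omega> + 2 ^ k)"

definition parity_sign :: "nat \<Rightarrow> real" where
  "parity_sign \<omega> = bit_sign 0 \<omega> * bit_sign 1 \<omega> * bit_sign 2 \<omega>"

lemma range8: "{0..<8::nat} = {0, 1, 2, 3, 4, 5, 6, 7}"
  by (auto simp: eval_nat_numeral)

lemma sum_range8: "(\<Sum>\<omega>\<in>{0..<8::nat}. f \<omega>) = f 0 + f 1 + f 2 + f 3 + f 4 + f 5 + f 6 + (f 7 :: real)"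
  by (simp add: range8)

lemma corr_uniform8: "corr uniform8 Xs = (\<Sum>\<omega>\<in>{0..<8}. prod_list (map (\<lambda>X. X \<omega>) Xs)) / 8"
  unfolding corr_def uniform8_def by (simp add: integral_pmf_of_set)

lemma prob_space_uniform8: "prob_space uniform8"
  unfolding uniform8_def by (rule prob_space_measure_pmf)

lemma pm1_rv_uniform8: "(\<forall>\<omega>. \<bar>X \<omega>\<bar> = 1) \<Longrightarrow> pm1_rv uniform8 X"
  by (simp add: pm1_rv_iff_abs uniform8_def)

lemma model1_uniform8:
  "model1 uniform8 (bit_sign 0) (bit_sign 1) (bit_sign 2) parity_sign
     (\<lambda>\<omega>. - bit_sign 0 \<omega> * bit_sign 2 \<omega>)"
  unfolding model1_def base_model_def
  by (simp add: prob_space_uniform8 pm1_rv_uniform8 corr_uniform8 sum_range8 parity_sign_def bit_sign_def)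

lemma model2_uniform8:
  "model2 uniform8 (bit_sign 0) (bit_sign 1) (bit_sign 2) (\<lambda>\<omega>. - parity_sign \<omega>)
     (\<lambda>\<omega>. - bit_sign 1 \<omega> * bit_sign 2 \<omega>)"
  unfolding model2_def base_model_def
  by (simp add: prob_space_uniform8 pm1_rv_uniform8 corr_uniform8 sum_range8 parity_sign_def bit_sign_def)

lemma flip_bit_bij: "bij_betw (flip_bit k) {0..<8} {0..<8}" if "k < 3"
proof -
  have "k = 0 \<or> k = 1 \<or> k = 2"
    using that by linarith
  then show ?thesis
    by (elim disjE; intro bij_betw_byWitness[where f' = "flip_bit k"]) (simp_all add: range8 flip_bit_def)
qed

lemma bit_sign_flip_bit:
  assumes "j < 3" "k < 3" "\<omega> < 8"
  shows "bit_sign j (flip_bit k \<omega>) = (if j = k then - bit_sign j \<omega> else bit_sign j \<omega>)"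
proof -
  have "j = 0 \<or> j = 1 \<or> j = 2" "k = 0 \<or> k = 1 \<or> k = 2" "\<omega> \<in> {0..<8}"
    using assms by auto
  then show ?thesis
    unfolding range8 by (elim disjE insertE; simp add: bit_sign_def flip_bit_def)
qed

lemma parity_sign_flip_bit: "parity_sign (flip_bit k \<omega>) = - parity_sign \<omega>" if "k < 3" "\<omega> < 8"
proof -
  have "k = 0 \<or> k = 1 \<or> k = 2"
    using that by linarith
  then show ?thesis
    using that by (elim disjE; simp add: parity_sign_def bit_sign_flip_bit)
qed

lemma joint_distr_proper_subfamily_parity:
  assumes "S \<subset> {0..3}"
  shows "joint_distr uniform8 (fam4 (bit_sign 0) (bit_sign 1) (bit_sign 2) parity_sign) S
       = joint_distr uniform8 (fam4 (bit_sign 0) (bit_sign 1) (bit_sign 2) (\<lambda>\<omega>. - parity_sign \<omega>)) S"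
proof -
  have S: "S \<subseteq> {0, 1, 2, 3}"
    using assms by auto
  obtain k where k: "k \<le> 3" "k \<notin> S"
    using psubset_imp_ex_mem[OF assms] by auto
  then consider "k = 3" | "k < 3"
    by linarith
  then show ?thesis
  proof cases
    case 1
    then show ?thesis
      unfolding uniform8_def using S k
      by (intro joint_distr_pmf_of_set_bij[where g = id]) (auto simp: fam4_def)
  next
    case 2
    then have "k = 0 \<or> k = 1 \<or> k = 2"
      by linarith
    then show ?thesis
      unfolding uniform8_def using S k 2
      by (intro joint_distr_pmf_of_set_bij[OF _ _ flip_bit_bij[OF 2]])
        (auto simp: fam4_def bit_sign_flip_bit parity_sign_flip_bit)
  qed
qed

theorem mainTheorem4:
  shows "(\<exists>(M :: nat measure) A1 A2 B1 B2 C1. model1 M A1 A2 B1 B2 C1)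
    \<and> (\<exists>(M :: nat measure) A1 A2 B1 B2 C2. model2 M A1 A2 B1 B2 C2)
    \<and> (\<forall>(M :: 'a measure) A1 A2 B1 B2 C1. model1 M A1 A2 B1 B2 C1 \<longrightarrow> corr M [A1, A2, B1, B2] = 1)
    \<and> (\<forall>(M :: 'b measure) A1 A2 B1 B2 C2. model2 M A1 A2 B1 B2 C2 \<longrightarrow> corr M [A1, A2, B1, B2] = -1)
    \<and> (\<exists>(M :: nat measure) A1 A2 B1 B2 C1 (M' :: nat measure) A1' A2' B1' B2' C2.
         model1 M A1 A2 B1 B2 C1 \<and> model2 M' A1' A2' B1' B2' C2 \<and>
         (\<forall>S. S \<subset> {0..3} \<longrightarrow>
            joint_distr M (fam4 A1 A2 B1 B2) S = joint_distr M' (fam4 A1' A2' B1' B2') S))"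
  using model1_uniform8 model2_uniform8 model1_corr_four model2_corr_four
    joint_distr_proper_subfamily_parity
  by blast

end
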